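(* Let $I$ be the set of initial statements of a definite action theory. Every $\mathbf{S5}$-state satisfying $I$ is equivalent to an $\mathbf{S5}$-state $(M',s')$ with $|M'[S]|\le 2^{|\mathcal F|}$.
   Context: Agents $\mathcal{AG}=\{1,\dots,n\}$ (finite), finite set of fluents $\mathcal F$. Belief formulae are built from propositional (fluent) formulae over $\mathcal F$ with $\mathbf B_i$, Boolean connectives and $\mathbf E_\alpha,\mathbf C_\alpha$; $\mathbf C=\mathbf C_{\mathcal{AG}}$. Kripke structure $M$: worlds $M[S]$, interpretations $M[\pi](u)\subseteq\mathcal F$, relations $M[i]$; state $(M,s)$; standard semantics ($\mathbf B_i\varphi$: $\varphi$ at all $M[i]$-successors; $\mathbf E_\alpha$: all $\mathbf B_i$, $i\in\alpha$; $\mathbf C_\alpha\varphi$: $\mathbf E^k_\alpha\varphi$ for all $k\ge0$). $\mathbf{S5}$-state: every $M[i]$ an equivalence relation. Two states are equivalent if they satisfy the same belief formulae. A state satisfies a set $I$ of statements "initially $\varphi$" if it satisfies every such $\varphi$. A definite action theory $(I,D)$ consists of a domain $D$ (action descriptions) and a set $I$ of statements each of one of the forms initially $\varphi$, initially $\mathbf C\varphi$, initially $\mathbf C(\mathbf B_i\varphi)$, initially $\mathbf C(\mathbf B_i\varphi\vee\mathbf B_i\neg\varphi)$, initially $\mathbf C(\neg\mathbf B_i\varphi\wedge\neg\mathbf B_i\neg\varphi)$ ($\varphi$ a fluent formula, $i$ an agent), such that for every fluent formula $\varphi$ and agent $i$, $I$ contains a statement of one of the last three forms with this $i$ and $\varphi$.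 *)

theory Defs
  imports Main
begin

datatype ('ag, 'f) bform =
    Atom 'f
  | Neg "('ag, 'f) bform"
  | Conj "('ag, 'f) bform" "('ag, 'f) bform"
  | Disj "('ag, 'f) bform" "('ag, 'f) bform"
  | Bel 'ag "('ag, 'f) bform"
  | Ev "'ag set" "('ag, 'f) bform"
  | Co "'ag set" "('ag, 'f) bform"

fun is_fluent :: "('ag, 'f) bform \<Rightarrow> bool" where
  "is_fluent (Atom p) = True"
| "is_fluent (Neg a) = is_fluent a"
| "is_fluent (Conj a b) = (is_fluent a \<and> is_fluent b)"
| "is_fluent (Disj a b) = (is_fluent a \<and> is_fluent b)"
| "is_fluent (Bel i a) = False"
| "is_fluent (Ev A a) = False"
| "is_fluent (Co A a) = False"

text \<open>Kripke structures: worlds M[S], interpretation M[pi], relations M[i].\<close>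

record ('w, 'ag, 'f) kripke =
  worlds :: "'w set"
  interp :: "'w \<Rightarrow> 'f set"
  rel :: "'ag \<Rightarrow> ('w \<times> 'w) set"

text \<open>Standard semantics; C_alpha phi holds iff E_alpha^k phi holds for all k \<ge> 0,
  i.e. phi holds at every world reachable by k steps of the union of the relations of alpha.\<close>

fun holds :: "('w, 'ag, 'f) kripke \<Rightarrow> 'w \<Rightarrow> ('ag, 'f) bform \<Rightarrow> bool" where
  "holds M u (Atom p) = (p \<in> interp M u)"
| "holds M u (Neg a) = (\<not> holds M u a)"
| "holds M u (Conj a b) = (holds M u a \<and> holds M u b)"
| "holds M u (Disj a b) = (holds M u a \<or> holds M u b)"
| "holds M u (Bel i a) = (\<forall>v. (u, v) \<in> rel M i \<longrightarrow> holds M v a)"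
| "holds M u (Ev A a) = (\<forall>i\<in>A. \<forall>v. (u, v) \<in> rel M i \<longrightarrow> holds M v a)"
| "holds M u (Co A a) =
     (\<forall>k. \<forall>v. (u, v) \<in> (\<Union>i\<in>A. rel M i) ^^ k \<longrightarrow> holds M v a)"

abbreviation CAll :: "('ag, 'f) bform \<Rightarrow> ('ag, 'f) bform" where
  "CAll \<equiv> Co UNIV"

definition s5_state :: "('w, 'ag, 'f) kripke \<Rightarrow> 'w \<Rightarrow> bool" where
  "s5_state M s \<longleftrightarrow> s \<in> worlds M \<and> (\<forall>i. equiv (worlds M) (rel M i))"

definition equivalent_states ::
  "('w, 'ag, 'f) kripke \<Rightarrow> 'w \<Rightarrow> ('v, 'ag, 'f) kripke \<Rightarrow> 'v \<Rightarrow> bool" where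
  "equivalent_states M s M' s' \<longleftrightarrow> (\<forall>\<phi>. holds M s \<phi> = holds M' s' \<phi>)"

datatype ('ag, 'f) init_stmt =
    Init "('ag, 'f) bform"
  | InitC "('ag, 'f) bform"
  | InitCB 'ag "('ag, 'f) bform"
  | InitCK 'ag "('ag, 'f) bform"
  | InitCU 'ag "('ag, 'f) bform"

fun stmt_formula :: "('ag, 'f) init_stmt \<Rightarrow> ('ag, 'f) bform" where
  "stmt_formula (Init \<phi>) = \<phi>"
| "stmt_formula (InitC \<phi>) = CAll \<phi>"
| "stmt_formula (InitCB i \<phi>) = CAll (Bel i \<phi>)"
| "stmt_formula (InitCK i \<phi>) = CAll (Disj (Bel i \<phi>) (Bel i (Neg \<phi>)))"
| "stmt_formula (InitCU i \<phi>) = CAll (Conj (Neg (Bel i \<phi>)) (Neg (Bel i (Neg \<phi>))))"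

fun stmt_fluent :: "('ag, 'f) init_stmt \<Rightarrow> ('ag, 'f) bform" where
  "stmt_fluent (Init \<phi>) = \<phi>"
| "stmt_fluent (InitC \<phi>) = \<phi>"
| "stmt_fluent (InitCB i \<phi>) = \<phi>"
| "stmt_fluent (InitCK i \<phi>) = \<phi>"
| "stmt_fluent (InitCU i \<phi>) = \<phi>"

text \<open>The initial statements I of a definite action theory (the domain D plays no role).\<close>
definition definite_init :: "('ag, 'f) init_stmt set \<Rightarrow> bool" where
  "definite_init I \<longleftrightarrow>
     (\<forall>st\<in>I. is_fluent (stmt_fluent st)) \<and>
     (\<forall>\<phi> i. is_fluent \<phi> \<longrightarrow>
        InitCB i \<phi> \<in> I \<or> InitCK i \<phi> \<in> I \<or> InitCU i \<phi> \<in> I)"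

definition satisfies_init :: "('w, 'ag, 'f) kripke \<Rightarrow> 'w \<Rightarrow> ('ag, 'f) init_stmt set \<Rightarrow> bool" where
  "satisfies_init M s I \<longleftrightarrow> (\<forall>st\<in>I. holds M s (stmt_formula st))"

end

theory Submission
  imports Defs
begin

text \<open>In the generated submodel of an S5-state satisfying the initial statements of a definite
  action theory, the interpretations of the i-successors of a world depend only on the
  interpretation of that world: for the characteristic formula \<phi> of any valuation, one of
  C(B_i \<phi>), C(B_i \<phi> \<or> B_i \<not>\<phi>), C(\<not>B_i \<phi> \<and> \<not>B_i \<not>\<phi>) holds, and each of them forces this.
  Identifying worlds with equal interpretation is therefore a bounded morphism onto an
  S5-structure with at most one world per valuation, and bounded morphisms preserve all
  belief formulae, including common belief.\<close>

definition rel_closed :: "'w set \<Rightarrow> ('w, 'ag, 'f) kripke \<Rightarrow> bool" where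
  "rel_closed R M \<longleftrightarrow> (\<forall>u\<in>R. \<forall>i v. (u, v) \<in> rel M i \<longrightarrow> v \<in> R)"

definition bounded_morphism_on ::
  "'w set \<Rightarrow> ('w, 'ag, 'f) kripke \<Rightarrow> ('w \<Rightarrow> 'v) \<Rightarrow> ('v, 'ag, 'f) kripke \<Rightarrow> bool" where
  "bounded_morphism_on R M h M' \<longleftrightarrow>
     (\<forall>u\<in>R. interp M' (h u) = interp M u \<and>
        (\<forall>i v. (u, v) \<in> rel M i \<longrightarrow> (h u, h v) \<in> rel M' i) \<and>
        (\<forall>i y. (h u, y) \<in> rel M' i \<longrightarrow> (\<exists>v. (u, v) \<in> rel M i \<and> h v = y)))"

lemma rel_closed_relpow:
  assumes "rel_closed R M" "u \<in> R" "(u, v) \<in> (\<Union>i\<in>A. rel M i) ^^ k"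
  shows "v \<in> R"
  using assms(3)
proof (induction k arbitrary: v)
  case (Suc k)
  then obtain w i where "(u, w) \<in> (\<Union>i\<in>A. rel M i) ^^ k" "(w, v) \<in> rel M i" by auto
  with Suc.IH assms(1) show ?case unfolding rel_closed_def by blast
qed (use assms(2) in simp)

lemma relpow_bounded_morphism_forth:
  assumes "rel_closed R M" "bounded_morphism_on R M h M'" "u \<in> R"
    and "(u, v) \<in> (\<Union>i\<in>A. rel M i) ^^ k"
  shows "(h u, h v) \<in> (\<Union>i\<in>A. rel M' i) ^^ k"
  using assms(4)
proof (induction k arbitrary: v)
  case (Suc k)
  then obtain w i where w: "(u, w) \<in> (\<Union>i\<in>A. rel M i) ^^ k" "i \<in> A" "(w, v) \<in> rel M i"
    by auto
  have "w \<in> R" using rel_closed_relpow[OF assms(1,3) w(1)] .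
  then have "(h w, h v) \<in> rel M' i" using assms(2) w(3) unfolding bounded_morphism_on_def by blast
  with Suc.IH[OF w(1)] w(2) show ?case by auto
qed simp

lemma relpow_bounded_morphism_back:
  assumes "rel_closed R M" "bounded_morphism_on R M h M'" "u \<in> R"
    and "(h u, y) \<in> (\<Union>i\<in>A. rel M' i) ^^ k"
  shows "\<exists>v. (u, v) \<in> (\<Union>i\<in>A. rel M i) ^^ k \<and> h v = y"
  using assms(4)
proof (induction k arbitrary: y)
  case (Suc k)
  then obtain z i where z: "(h u, z) \<in> (\<Union>i\<in>A. rel M' i) ^^ k" "i \<in> A" "(z, y) \<in> rel M' i"
    by auto
  from Suc.IH[OF z(1)] obtain w where w: "(u, w) \<in> (\<Union>i\<in>A. rel M i) ^^ k" "h w = z"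
    by blast
  have "w \<in> R" using rel_closed_relpow[OF assms(1,3) w(1)] .
  with assms(2) w(2) z(3) obtain v where "(w, v) \<in> rel M i" "h v = y"
    unfolding bounded_morphism_on_def by blast
  with w(1) z(2) show ?case by auto
qed auto

lemma holds_bounded_morphism:
  assumes "rel_closed R M" "bounded_morphism_on R M h M'" "u \<in> R"
  shows "holds M' (h u) \<phi> = holds M u \<phi>"
  using assms(3)
proof (induction \<phi> arbitrary: u)
  case (Atom p)
  then show ?case using assms(2) by (simp add: bounded_morphism_on_def)
next
  case (Bel i a)
  from Bel.prems assms(2) have forth: "(u, v) \<in> rel M i \<Longrightarrow> (h u, h v) \<in> rel M' i"
    and bk: "(h u, y) \<in> rel M' i \<Longrightarrow> \<exists>v. (u, v) \<in> rel M i \<and> h v = y" for v y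
    unfolding bounded_morphism_on_def by blast+
  have IH: "holds M' (h v) a = holds M v a" if "(u, v) \<in> rel M i" for v
    using Bel.IH assms(1) Bel.prems that unfolding rel_closed_def by blast
  show ?case using forth bk IH by auto
next
  case (Ev A a)
  from Ev.prems assms(2) have forth: "(u, v) \<in> rel M i \<Longrightarrow> (h u, h v) \<in> rel M' i"
    and bk: "(h u, y) \<in> rel M' i \<Longrightarrow> \<exists>v. (u, v) \<in> rel M i \<and> h v = y" for i v y
    unfolding bounded_morphism_on_def by blast+
  have IH: "holds M' (h v) a = holds M v a" if "(u, v) \<in> rel M i" for i v
    using Ev.IH assms(1) Ev.prems that unfolding rel_closed_def by blast
  show ?case using forth bk IH by simp blast
next
  case (Co A a)
  have IH: "holds M' (h v) a = holds M v a" if "(u, v) \<in> (\<Union>i\<in>A. rel M i) ^^ k" for v k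
    using Co.IH rel_closed_relpow[OF assms(1) Co.prems that] .
  show ?case
    using relpow_bounded_morphism_forth[OF assms(1,2) Co.prems]
      relpow_bounded_morphism_back[OF assms(1,2) Co.prems] IH
    by (simp only: holds.simps) metis
qed simp_all

definition reachable :: "('w, 'ag, 'f) kripke \<Rightarrow> 'w \<Rightarrow> 'w set" where
  "reachable M s = {v. \<exists>k. (s, v) \<in> (\<Union>i. rel M i) ^^ k}"

lemma start_in_reachable: "s \<in> reachable M s"
  unfolding reachable_def by (blast intro: relpow_0_I)

lemma rel_closed_reachable: "rel_closed (reachable M s) M"
  unfolding rel_closed_def reachable_def by (blast intro: relpow_Suc_I)

lemma reachable_subset:
  assumes "rel_closed R M" "s \<in> R"
  shows "reachable M s \<subseteq> R"
  unfolding reachable_def using rel_closed_relpow[OF assms] by auto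

lemma holds_CAll_reachable: "holds M s (CAll \<psi>) \<Longrightarrow> v \<in> reachable M s \<Longrightarrow> holds M v \<psi>"
  unfolding reachable_def by (simp only: holds.simps) blast

text \<open>The empty conjunction is rendered as the tautology p \<or> \<not>p for an arbitrary fluent p.\<close>

definition char_formula :: "'f list \<Rightarrow> 'f set \<Rightarrow> ('ag, 'f) bform" where
  "char_formula xs X = foldr (\<lambda>p acc. Conj (if p \<in> X then Atom p else Neg (Atom p)) acc) xs
     (Disj (Atom undefined) (Neg (Atom undefined)))"

lemma is_fluent_char_formula: "is_fluent (char_formula xs X)"
  by (induction xs) (auto simp: char_formula_def)

lemma holds_char_formula:
  "holds M x (char_formula xs X) \<longleftrightarrow> (\<forall>p\<in>set xs. p \<in> interp M x \<longleftrightarrow> p \<in> X)"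
  by (induction xs) (auto simp: char_formula_def)

lemma holds_char_formula_UNIV:
  "set xs = UNIV \<Longrightarrow> holds M x (char_formula xs X) \<longleftrightarrow> interp M x = X"
  unfolding holds_char_formula by blast

definition interp_determines_successors :: "'w set \<Rightarrow> ('w, 'ag, 'f) kripke \<Rightarrow> bool" where
  "interp_determines_successors R M \<longleftrightarrow>
     (\<forall>u\<in>R. \<forall>w\<in>R. interp M u = interp M w \<longrightarrow>
        (\<forall>i w'. (w, w') \<in> rel M i \<longrightarrow> (\<exists>v. (u, v) \<in> rel M i \<and> interp M v = interp M w')))"

lemma s5_state_rel_closed: "s5_state M s \<Longrightarrow> rel_closed (worlds M) M"
  unfolding s5_state_def rel_closed_def equiv_def refl_on_def by blast

lemma s5_state_refl: "s5_state M s \<Longrightarrow> u \<in> worlds M \<Longrightarrow> (u, u) \<in> rel M i"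
  unfolding s5_state_def equiv_def refl_on_def by blast

lemma s5_state_reachable_subset:
  assumes "s5_state M s"
  shows "reachable M s \<subseteq> worlds M"
  using reachable_subset[OF s5_state_rel_closed[OF assms]] assms by (simp add: s5_state_def)

lemma definite_init_interp_determines_successors:
  fixes I :: "('ag, 'f::finite) init_stmt set"
  assumes definite: "definite_init I" and S5: "s5_state M s" and init: "satisfies_init M s I"
  shows "interp_determines_successors (reachable M s) M"
  unfolding interp_determines_successors_def
proof (intro ballI allI impI)
  fix u w i w'
  assume u: "u \<in> reachable M s" and w: "w \<in> reachable M s"
    and same: "interp M u = interp M w" and ww': "(w, w') \<in> rel M i"
  obtain xs :: "'f list" where xs: "set xs = UNIV" using finite_list[OF finite_UNIV] by blast
  define \<phi> :: "('ag, 'f) bform" where "\<phi> = char_formula xs (interp M w')"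
  have holds_\<phi>: "holds M x \<phi> \<longleftrightarrow> interp M x = interp M w'" for x
    unfolding \<phi>_def using holds_char_formula_UNIV[OF xs] .
  have refl: "(x, x) \<in> rel M i" if "x \<in> reachable M s" for x
    using s5_state_refl[OF S5] s5_state_reachable_subset[OF S5] that by blast
  have common: "holds M v \<psi>" if "st \<in> I" "stmt_formula st = CAll \<psi>" "v \<in> reachable M s"
    for st \<psi> v
    using holds_CAll_reachable init that unfolding satisfies_init_def by metis
  have "InitCB i \<phi> \<in> I \<or> InitCK i \<phi> \<in> I \<or> InitCU i \<phi> \<in> I"
    using definite is_fluent_char_formula unfolding definite_init_def \<phi>_def by blast
  then show "\<exists>v. (u, v) \<in> rel M i \<and> interp M v = interp M w'"
  proof (elim disjE)
    assume "InitCB i \<phi> \<in> I"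
    then have "holds M u (Bel i \<phi>)" using common u by fastforce
    then show ?thesis using refl[OF u] holds_\<phi> by auto
  next
    assume "InitCK i \<phi> \<in> I"
    then have "holds M w (Disj (Bel i \<phi>) (Bel i (Neg \<phi>)))" using common w by fastforce
    then have "holds M w (Bel i \<phi>)" using ww' holds_\<phi> by auto
    then show ?thesis using refl u w same holds_\<phi> by auto
  next
    assume "InitCU i \<phi> \<in> I"
    then have "holds M u (Neg (Bel i (Neg \<phi>)))" using common u by fastforce
    then show ?thesis using holds_\<phi> by auto
  qed
qed

text \<open>Worlds of the quotient are codes g X of valuations X, so inv g recovers the interpretation.\<close>

definition interp_quotient ::
  "'w set \<Rightarrow> ('w, 'ag, 'f) kripke \<Rightarrow> ('f set \<Rightarrow> 'v) \<Rightarrow> ('v, 'ag, 'f) kripke" where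
  "interp_quotient R M g =
     \<lparr>worlds = (\<lambda>u. g (interp M u)) ` R, interp = inv g,
      rel = (\<lambda>i. {(g (interp M u), g (interp M v)) | u v. u \<in> R \<and> v \<in> R \<and> (u, v) \<in> rel M i})\<rparr>"

lemma rel_interp_quotient:
  "(x, y) \<in> rel (interp_quotient R M g) i \<longleftrightarrow>
     (\<exists>u\<in>R. \<exists>v\<in>R. (u, v) \<in> rel M i \<and> x = g (interp M u) \<and> y = g (interp M v))"
  unfolding interp_quotient_def by auto

lemma bounded_morphism_interp_quotient:
  assumes "inj g" "rel_closed R M" "interp_determines_successors R M"
  shows "bounded_morphism_on R M (\<lambda>u. g (interp M u)) (interp_quotient R M g)"
  unfolding bounded_morphism_on_def
proof (intro ballI conjI allI impI)
  fix u assume u: "u \<in> R"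
  show "interp (interp_quotient R M g) (g (interp M u)) = interp M u"
    using assms(1) by (simp add: interp_quotient_def)
  show "(g (interp M u), g (interp M v)) \<in> rel (interp_quotient R M g) i"
    if "(u, v) \<in> rel M i" for i v
    using assms(2) u that unfolding rel_closed_def rel_interp_quotient by blast
  show "\<exists>v. (u, v) \<in> rel M i \<and> g (interp M v) = y"
    if y: "(g (interp M u), y) \<in> rel (interp_quotient R M g) i" for i y
  proof -
    obtain w w' where "w \<in> R" "(w, w') \<in> rel M i" "g (interp M u) = g (interp M w)"
      "y = g (interp M w')"
      using y unfolding rel_interp_quotient by blast
    moreover note injD[OF assms(1) calculation(3)]
    ultimately obtain v where "(u, v) \<in> rel M i" "interp M v = interp M w'"
      using assms(3) u unfolding interp_determines_successors_def by blast
    with \<open>y = g (interp M w')\<close> show ?thesis by auto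
  qed
qed

lemma equiv_interp_quotient:
  assumes "inj g" "rel_closed R M" "interp_determines_successors R M"
    and "R \<subseteq> worlds M" "equiv (worlds M) (rel M i)"
  shows "equiv (worlds (interp_quotient R M g)) (rel (interp_quotient R M g) i)"
proof (rule equivI)
  have refl: "(u, u) \<in> rel M i" and sym: "(u, v) \<in> rel M i \<Longrightarrow> (v, u) \<in> rel M i"
    and trans: "(u, v) \<in> rel M i \<Longrightarrow> (v, w) \<in> rel M i \<Longrightarrow> (u, w) \<in> rel M i"
    if "u \<in> R" for u v w
    using assms(4,5) that unfolding equiv_def refl_on_def sym_def trans_def by blast+
  show "rel (interp_quotient R M g) i
    \<subseteq> worlds (interp_quotient R M g) \<times> worlds (interp_quotient R M g)"
    by (auto simp: interp_quotient_def)
  show "refl_on (worlds (interp_quotient R M g)) (rel (interp_quotient R M g) i)"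
    unfolding refl_on_def rel_interp_quotient using refl by (auto simp: interp_quotient_def)
  show "sym (rel (interp_quotient R M g) i)"
    unfolding sym_def rel_interp_quotient using sym by blast
  show "trans (rel (interp_quotient R M g) i)"
  proof (rule transI)
    fix x y z
    assume "(x, y) \<in> rel (interp_quotient R M g) i" "(y, z) \<in> rel (interp_quotient R M g) i"
    then obtain u v v' w where uv: "u \<in> R" "v \<in> R" "(u, v) \<in> rel M i"
      and v'w: "v' \<in> R" "(v', w) \<in> rel M i" "g (interp M v) = g (interp M v')"
      and xz: "x = g (interp M u)" "z = g (interp M w)"
      unfolding rel_interp_quotient by (metis (no_types))
    obtain w'' where "(v, w'') \<in> rel M i" "interp M w'' = interp M w"
      using assms(3) uv(2) v'w injD[OF assms(1) v'w(3)]
      unfolding interp_determines_successors_def by blast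
    moreover have "w'' \<in> R" using assms(2) uv(2) calculation(1) unfolding rel_closed_def by blast
    ultimately show "(x, z) \<in> rel (interp_quotient R M g) i"
      using trans[OF uv(1,3)] uv(1) xz unfolding rel_interp_quotient by metis
  qed
qed

lemma card_worlds_interp_quotient:
  fixes M :: "('w, 'ag, 'f::finite) kripke"
  shows "finite (worlds (interp_quotient R M g)) \<and>
    card (worlds (interp_quotient R M g)) \<le> 2 ^ card (UNIV :: 'f set)"
proof -
  have worlds: "worlds (interp_quotient R M g) = g ` interp M ` R"
    by (simp add: interp_quotient_def image_image)
  have "card (g ` interp M ` R) \<le> card (interp M ` R)"
    by (rule card_image_le) simp
  also have "\<dots> \<le> card (UNIV :: 'f set set)"
    by (rule card_mono) simp_all
  also have "\<dots> = 2 ^ card (UNIV :: 'f set)"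
    by (simp flip: Pow_UNIV add: card_Pow)
  finally show ?thesis unfolding worlds by simp
qed

theorem lemma16:
  fixes I :: "('ag::finite, 'f::finite) init_stmt set"
    and M :: "('w, 'ag, 'f) kripke" and s :: 'w
  assumes "definite_init I"
    and "s5_state M s"
    and "satisfies_init M s I"
  shows "\<exists>(M' :: (nat, 'ag, 'f) kripke) s'.
           s5_state M' s' \<and> finite (worlds M') \<and>
           card (worlds M') \<le> 2 ^ card (UNIV :: 'f set) \<and>
           equivalent_states M s M' s'"
proof -
  define R where "R = reachable M s"
  obtain g :: "'f set \<Rightarrow> nat" where g: "inj g"
    using finite_imp_inj_to_nat_seg[of "UNIV :: 'f set set"] by auto
  define N where "N = interp_quotient R M g"
  have closed: "rel_closed R M" and s_in: "s \<in> R"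
    unfolding R_def by (rule rel_closed_reachable, rule start_in_reachable)
  have determined: "interp_determines_successors R M"
    unfolding R_def by (rule definite_init_interp_determines_successors[OF assms])
  have equiv_M: "equiv (worlds M) (rel M i)" for i
    using assms(2) by (simp add: s5_state_def)
  have "R \<subseteq> worlds M"
    unfolding R_def by (rule s5_state_reachable_subset[OF assms(2)])
  then have "s5_state N (g (interp M s))"
    using equiv_interp_quotient[OF g closed determined _ equiv_M] s_in
    unfolding s5_state_def N_def by (simp add: interp_quotient_def)
  moreover have "equivalent_states M s N (g (interp M s))"
    using holds_bounded_morphism[OF closed bounded_morphism_interp_quotient[OF g closed determined]
        s_in]
    unfolding equivalent_states_def N_def by simp
  ultimately show ?thesis
    using card_worlds_interp_quotient[of R M g] unfolding N_def by blast
qed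

end
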